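(* Fix $\kappa\ge1$. There exist constants $\kappa_1=\kappa_1(\kappa)>0$, $\kappa_2=\kappa_2(\kappa)>0$ and an integer $n_0=n_0(\kappa)$, depending only on $\kappa$, such that the following holds. Let $X_1,X_2,\dots$ be i.i.d. real random variables whose common distribution belongs to $\mathcal{S}(\kappa)$, with $\mathbb{E}X_1=0$ and $\mathbb{E}X_1^2=\sigma^2>0$. Then for all $n\ge n_0$ and all $0\le\gamma\le\kappa_1\sigma$, \[ \mathbb{P}\Big\{\sum_{i=1}^nX_i\ge\gamma n\Big\}\ \ge\ \frac14\exp\Big\{-\frac{n\gamma^2}{\kappa_2\sigma^2}\Big\}. \]
   Context: A real random variable $X$ is sub-Gaussian with tail parameter $s^2$ if $\mathbb{E}\,e^{\lambda(X-\mathbb{E}X)}\le e^{\lambda^2s^2/2}$ for all $\lambda\in\mathbb{R}$. For $\kappa>0$, $\mathcal{S}(\kappa)$ is the class of distributions with variance $\sigma^2>0$ that are sub-Gaussian with some tail parameter $s^2$ satisfying $1\le s^2/\sigma^2<\kappa$. *)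

theory Defs
  imports "HOL-Probability.Probability"
begin

definition real_distr :: "real measure \<Rightarrow> bool" where
  "real_distr \<mu> \<longleftrightarrow> prob_space \<mu> \<and> sets \<mu> = sets borel"

text \<open>Mean of a distribution (only meaningful when integrable).\<close>
definition dmean :: "real measure \<Rightarrow> real" where
  "dmean \<mu> = (\<integral>x. x \<partial>\<mu>)"

definition dvar :: "real measure \<Rightarrow> real" where
  "dvar \<mu> = (\<integral>x. (x - dmean \<mu>)\<^sup>2 \<partial>\<mu>)"

text \<open>The expectation of the nonnegative variable exp(...) is taken as a (possibly infinite)
  nonnegative integral, so the inequality includes finiteness.\<close>
definition sub_gaussian :: "real measure \<Rightarrow> real \<Rightarrow> bool" where
  "sub_gaussian \<mu> s2 \<longleftrightarrow> real_distr \<mu> \<and> integrable \<mu> (\<lambda>x. x) \<and>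
     (\<forall>l::real. (\<integral>\<^sup>+x. ennreal (exp (l * (x - dmean \<mu>))) \<partial>\<mu>)
                 \<le> ennreal (exp (l\<^sup>2 * s2 / 2)))"

definition Sclass :: "real \<Rightarrow> real measure set" where
  "Sclass \<kappa> = {\<mu>. real_distr \<mu> \<and> integrable \<mu> (\<lambda>x. x\<^sup>2) \<and> dvar \<mu> > 0 \<and>
     (\<exists>s2. sub_gaussian \<mu> s2 \<and> 1 \<le> s2 / dvar \<mu> \<and> s2 / dvar \<mu> < \<kappa>)}"

end

theory Submission
  imports Defs
begin

(* Write S_n for the sum of n independent copies of a centred distribution mu in S(kappa) with
   variance sigma^2, and g(k) = P{S_k >= gamma k}.  The argument has two halves.

   (1) A uniform central limit theorem.  The sub-Gaussian moment generating function bounds the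
   fourth moment by 256 kappa^2 sigma^4; this controls the Taylor error of the characteristic
   function, so S_n / (sigma sqrt n) tends to N(0,1) uniformly over the class (Levy continuity
   theorem).  Since P{N(0,1) > 1/2} > 1/4, there is an N with P{S_n >= sigma sqrt n / 2} >= 1/4
   for all n >= N and all such mu (uniform_clt_lower_bound).

   (2) A blocking argument.  g is supermultiplicative (independent blocks), and by (1) g(k) >= 1/4
   whenever N <= k <= 2r with r = sigma^2/(8 gamma^2).  Splitting n into blocks of length
   L = floor r gives g(n) >= (1/4)^(n div L) >= exp(-32 n gamma^2 / sigma^2) / 4, provided
   gamma is small enough that r >= N + 1 (tail_prob_exp_lower_bound). *)

definition tail_prob :: "real measure \<Rightarrow> nat set \<Rightarrow> real \<Rightarrow> real" where
  "tail_prob \<mu> I c = measure (PiM I (\<lambda>_. \<mu>)) {\<omega> \<in> space (PiM I (\<lambda>_. \<mu>)). c \<le> (\<Sum>i\<in>I. \<omega> i)}"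

definition scaled_sum_law :: "real measure \<Rightarrow> nat set \<Rightarrow> real \<Rightarrow> real measure" where
  "scaled_sum_law \<mu> I c = distr (PiM I (\<lambda>_. \<mu>)) borel (\<lambda>\<omega>. (\<Sum>i\<in>I. \<omega> i) / c)"

definition centred_in_S :: "real \<Rightarrow> real measure \<Rightarrow> real \<Rightarrow> bool" where
  "centred_in_S \<kappa> \<mu> \<sigma> \<longleftrightarrow> \<mu> \<in> Sclass \<kappa> \<and> dmean \<mu> = 0 \<and> 0 < \<sigma> \<and> (\<integral>x. x\<^sup>2 \<partial>\<mu>) = \<sigma>\<^sup>2"

lemma real_distr_iff: "real_distr \<mu> \<longleftrightarrow> real_distribution \<mu>"
  by (simp add: real_distr_def real_distribution_def real_distribution_axioms_def)

lemma sum_borel_measurable_PiM: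
  assumes "real_distribution \<mu>"
  shows "(\<lambda>\<omega>. \<Sum>i\<in>I. \<omega> i) \<in> borel_measurable (PiM I (\<lambda>_. \<mu>))"
proof -
  interpret real_distribution \<mu> by fact
  show ?thesis by measurable
qed

lemma tail_event_sets:
  assumes "real_distribution \<mu>"
  shows "{\<omega> \<in> space (PiM I (\<lambda>_. \<mu>)). c \<le> (\<Sum>i\<in>I. \<omega> i)} \<in> sets (PiM I (\<lambda>_. \<mu>))"
proof -
  note [measurable] = sum_borel_measurable_PiM[OF assms, of I]
  show ?thesis by measurable
qed

lemma prob_space_PiM_iid: "real_distribution \<mu> \<Longrightarrow> prob_space (PiM I (\<lambda>_. \<mu>))"
  by (rule prob_space_PiM) (simp add: real_distribution_def)

lemma tail_prob_antimono:
  assumes "real_distribution \<mu>" and "c \<le> d"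
  shows "tail_prob \<mu> I d \<le> tail_prob \<mu> I c"
proof -
  interpret prob_space "PiM I (\<lambda>_. \<mu>)" using prob_space_PiM_iid[OF assms(1)] .
  show ?thesis
    unfolding tail_prob_def
    by (rule finite_measure_mono[OF _ tail_event_sets[OF assms(1)]]) (use assms(2) in auto)
qed

lemma real_distribution_scaled_sum_law:
  assumes "real_distribution \<mu>"
  shows "real_distribution (scaled_sum_law \<mu> I c)"
proof -
  note [measurable] = sum_borel_measurable_PiM[OF assms, of I]
  show ?thesis
    unfolding scaled_sum_law_def
    by (rule prob_space.real_distribution_distr[OF prob_space_PiM_iid[OF assms]]) measurable
qed

text \<open>Every outcome has either \<open>S/c \<le> 1/2\<close> or \<open>S \<ge> c/2\<close>: the cdf of the scaled sum at \<open>1/2\<close>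
  and the tail probability at \<open>c/2\<close> add up to at least one.\<close>
lemma cdf_scaled_sum_law_plus_tail:
  assumes rd: "real_distribution \<mu>" and c: "0 < c"
  shows "1 \<le> cdf (scaled_sum_law \<mu> I c) (1/2) + tail_prob \<mu> I (c / 2)"
proof -
  interpret prob_space "PiM I (\<lambda>_. \<mu>)" using prob_space_PiM_iid[OF rd] .
  note [measurable] = sum_borel_measurable_PiM[OF rd, of I]
  let ?S = "\<lambda>\<omega>. \<Sum>i\<in>I. \<omega> i"
  let ?A = "{\<omega> \<in> space (PiM I (\<lambda>_. \<mu>)). ?S \<omega> / c \<le> 1/2}"
  let ?B = "{\<omega> \<in> space (PiM I (\<lambda>_. \<mu>)). c / 2 \<le> ?S \<omega>}"
  have sets: "?A \<in> events" "?B \<in> events" by measurable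
  have "space (PiM I (\<lambda>_. \<mu>)) = ?A \<union> ?B"
    using c by (auto simp: divide_le_eq not_le less_divide_eq)
  then have "1 \<le> prob ?A + prob ?B"
    using measure_Un_le[OF sets] prob_space by simp
  moreover have "cdf (scaled_sum_law \<mu> I c) (1/2) = prob ?A"
    unfolding cdf_def scaled_sum_law_def
    by (subst measure_distr) (auto simp: vimage_def Int_def conj_commute)
  ultimately show ?thesis by (simp add: tail_prob_def)
qed

lemma std_normal_symmetric:
  assumes [measurable]: "A \<in> sets borel"
  shows "emeasure std_normal_distribution (uminus -` A) = emeasure std_normal_distribution A"
proof -
  have m: "(\<lambda>x. ennreal (std_normal_density x) * indicator A x) \<in> borel_measurable borel"
    by measurable
  have "uminus -` A \<in> sets borel"
    using measurable_sets[of "uminus :: real \<Rightarrow> real" borel borel A] by simp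
  then have "emeasure std_normal_distribution (uminus -` A)
      = (\<integral>\<^sup>+x. ennreal (std_normal_density x) * indicator (uminus -` A) x \<partial>lborel)"
    by (simp add: emeasure_density)
  also have "\<dots> = (\<integral>\<^sup>+x. ennreal (std_normal_density (0 + (-1) * x)) * indicator A (0 + (-1) * x) \<partial>lborel)"
    by (simp add: std_normal_density_def indicator_def)
  also have "\<dots> = (\<integral>\<^sup>+x. ennreal (std_normal_density x) * indicator A x \<partial>lborel)"
    using nn_integral_real_affine[OF m, of "-1" 0] by simp
  also have "\<dots> = emeasure std_normal_distribution A"
    by (simp add: emeasure_density)
  finally show ?thesis .
qed

text \<open>The standard normal density is bounded by \<open>1/sqrt(2 pi)\<close>, so intervals have
  proportionally small mass.\<close>
lemma std_normal_interval_le: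
  assumes "a \<le> b"
  shows "measure std_normal_distribution {a..b} \<le> (b - a) / sqrt (2*pi)"
proof -
  have "emeasure std_normal_distribution {a..b}
      = (\<integral>\<^sup>+x. ennreal (std_normal_density x) * indicator {a..b} x \<partial>lborel)"
    by (simp add: emeasure_density)
  also have "\<dots> \<le> (\<integral>\<^sup>+x. ennreal (1 / sqrt (2*pi)) * indicator {a..b::real} x \<partial>lborel)"
  proof (intro nn_integral_mono mult_right_mono)
    fix x :: real
    have "exp (- x\<^sup>2 / 2) \<le> 1" by simp
    then show "ennreal (std_normal_density x) \<le> ennreal (1 / sqrt (2*pi))"
      by (intro ennreal_leI) (simp add: std_normal_density_def divide_right_mono)
  qed simp
  also have "\<dots> = ennreal ((b - a) / sqrt (2*pi))"
    using assms by (simp add: nn_integral_cmult ennreal_mult'[symmetric])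
  finally show ?thesis
    using assms by (simp add: measure_def enn2real_leI)
qed

text \<open>The normal law has no atoms, so its cdf is continuous; weak convergence therefore gives
  convergence of cdfs at \<open>1/2\<close>.\<close>
lemma isCont_std_normal_cdf: "isCont (cdf std_normal_distribution) x"
proof -
  interpret real_distribution std_normal_distribution by (rule real_dist_normal_dist)
  have "measure std_normal_distribution {x} \<le> 0"
    using std_normal_interval_le[of x x] by simp
  then show ?thesis
    by (simp add: isCont_cdf measure_nonneg antisym)
qed

text \<open>\<open>\<Phi>(1/2) < 3/4\<close>: by symmetry \<open>\<Phi>(1/2) = 1/2 + P{|Z| \<le> 1/2}/2\<close> and the central interval
  has mass at most \<open>1/sqrt(2 pi) < 1/2\<close>.\<close>
lemma std_normal_cdf_half: "cdf std_normal_distribution (1/2) < 3/4"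
proof -
  interpret N: real_distribution std_normal_distribution by (rule real_dist_normal_dist)
  let ?m = "measure std_normal_distribution"
  have "uminus -` {1/2<..} = {..<-1/2::real}" by auto
  then have left: "?m {..<-1/2} = ?m {1/2<..}"
    using std_normal_symmetric[of "{1/2<..}"] by (simp add: measure_def)
  have "{..1/2::real} = {..<-1/2} \<union> {-1/2..1/2}" by auto
  moreover have "?m ({..<-1/2} \<union> {-1/2..1/2}) = ?m {..<-1/2} + ?m {-1/2..1/2::real}"
    by (rule N.finite_measure_Union) auto
  ultimately have split: "?m {..1/2} = ?m {..<-1/2} + ?m {-1/2..1/2}" by simp
  have "{1/2<..} = UNIV - {..1/2::real}" by auto
  then have right: "?m {1/2<..} = 1 - ?m {..1/2}"
    using N.prob_compl[of "{..1/2}"] by (simp add: N.borel_UNIV)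
  have "2 < sqrt (2*pi)"
    using pi_gt3 by (simp add: real_less_rsqrt)
  then have "1 / sqrt (2*pi) < 1/2" by (simp add: divide_less_eq)
  moreover have "?m {-1/2..1/2} \<le> 1 / sqrt (2*pi)"
    using std_normal_interval_le[of "-1/2" "1/2"] by simp
  ultimately have "?m {-1/2..1/2} < 1/2" by linarith
  then show ?thesis
    unfolding cdf_def using left split right by linarith
qed

text \<open>Elementary estimate \<open>y^4 \<le> 64 (e^y + e^-y)\<close>, from \<open>e^(y/2) \<ge> y^2/8\<close> for \<open>y \<ge> 0\<close>;
  it converts exponential moments into a fourth moment.\<close>
lemma quartic_le_exp: "0 \<le> y \<Longrightarrow> y^4 / 64 \<le> exp (y::real)"
proof -
  assume y: "0 \<le> y"
  have "y^2/8 \<le> 1 + y/2 + (y/2)^2/2" using y by (simp add: power2_eq_square)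
  also have "\<dots> \<le> exp (y/2)" using exp_lower_Taylor_quadratic[of "y/2"] y by simp
  finally have "(y^2/8)^2 \<le> (exp (y/2))^2" by (rule power_mono) simp
  also have "(exp (y/2))^2 = exp y" by (simp add: power2_eq_square exp_add[symmetric])
  finally show ?thesis by (simp add: power2_eq_square power4_eq_xxxx)
qed

lemma quartic_le_exp_sum: "(y::real)^4 \<le> 64 * (exp y + exp (-y))"
proof (cases "0 \<le> y")
  case True
  have "y^4 \<le> 64 * exp y" using quartic_le_exp[OF True] by simp
  then show ?thesis using exp_gt_zero[of "-y"] unfolding distrib_left by linarith
next
  case False
  have "y^4 \<le> 64 * exp (-y)" using quartic_le_exp[of "-y"] False by simp
  then show ?thesis using exp_gt_zero[of y] unfolding distrib_left by linarith
qed

lemma quartic_le_exp_sum_scaled: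
  assumes s: "0 < s"
  shows "x^4 \<le> 64 * s^2 * (exp (x / sqrt s) + exp ((- x) / sqrt s))"
proof -
  have "(sqrt s)^4 = ((sqrt s)^2)^2"
    by (simp flip: power_mult)
  then have "(sqrt s)^4 = s^2"
    using s by simp
  then have "(x / sqrt s)^4 = x^4 / s^2"
    by (simp add: power_divide)
  then have "x^4 / s^2 \<le> 64 * (exp (x / sqrt s) + exp ((- x) / sqrt s))"
    using quartic_le_exp_sum[of "x / sqrt s"] by simp
  then show ?thesis
    using s by (simp add: divide_le_eq mult.commute mult.left_commute)
qed

text \<open>A centred sub-Gaussian law with parameter \<open>s\<close> has \<open>E X^4 \<le> 256 s^2\<close>: integrate the previous
  inequality and use \<open>E e^(\<pm>X/sqrt s) \<le> e^(1/2) \<le> 2\<close>.\<close>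
lemma sub_gaussian_nn_fourth_moment:
  assumes sg: "sub_gaussian \<mu> s" and m0: "dmean \<mu> = 0" and s: "0 < s"
  shows "(\<integral>\<^sup>+x. ennreal (x^4) \<partial>\<mu>) \<le> ennreal (256 * s^2)"
proof -
  interpret real_distribution \<mu> using sg by (simp add: sub_gaussian_def real_distr_iff)
  have mgf: "(\<integral>\<^sup>+x. ennreal (exp (d * x / sqrt s)) \<partial>\<mu>) \<le> ennreal 2"
    if d: "d = 1 \<or> d = -1" for d
  proof -
    have "(\<integral>\<^sup>+x. ennreal (exp ((d / sqrt s) * (x - dmean \<mu>))) \<partial>\<mu>)
        \<le> ennreal (exp ((d / sqrt s)\<^sup>2 * s / 2))"
      using sg unfolding sub_gaussian_def by blast
    moreover have "(d / sqrt s)\<^sup>2 * s = 1"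
      using d s by (auto simp: power_divide)
    ultimately have "(\<integral>\<^sup>+x. ennreal (exp (d * x / sqrt s)) \<partial>\<mu>) \<le> ennreal (exp (1/2))"
      using m0 by simp
    also have "\<dots> \<le> ennreal 2"
      by (rule ennreal_leI) (rule exp_half_le2)
    finally show ?thesis .
  qed
  let ?e = "\<lambda>d x. ennreal (exp (d * x / sqrt s))"
  have pointwise: "ennreal (x^4) \<le> ennreal (64 * s^2) * (?e 1 x + ?e (-1) x)" for x
  proof -
    have "ennreal (x^4) \<le> ennreal (64 * s^2 * (exp (x / sqrt s) + exp ((- x) / sqrt s)))"
      by (rule ennreal_leI) (rule quartic_le_exp_sum_scaled[OF s])
    then show ?thesis
      by (simp add: ennreal_mult ennreal_plus)
  qed
  have "(\<integral>\<^sup>+x. ennreal (x^4) \<partial>\<mu>) \<le> (\<integral>\<^sup>+x. ennreal (64 * s^2) * (?e 1 x + ?e (-1) x) \<partial>\<mu>)"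
    by (intro nn_integral_mono pointwise)
  also have "\<dots> = ennreal (64 * s^2) * ((\<integral>\<^sup>+x. ?e 1 x \<partial>\<mu>) + (\<integral>\<^sup>+x. ?e (-1) x \<partial>\<mu>))"
    by (simp add: nn_integral_cmult nn_integral_add)
  also have "\<dots> \<le> ennreal (64 * s^2) * (ennreal 2 + ennreal 2)"
    by (intro mult_left_mono add_mono mgf) auto
  also have "\<dots> = ennreal (64 * s^2) * ennreal 4"
    by (simp flip: ennreal_plus)
  also have "\<dots> = ennreal (256 * s^2)"
    by (subst ennreal_mult[symmetric]) auto
  finally show ?thesis .
qed

lemma sub_gaussian_fourth_moment:
  assumes sg: "sub_gaussian \<mu> s" and m0: "dmean \<mu> = 0" and s: "0 < s"
  shows "integrable \<mu> (\<lambda>x. x^4)" and "(\<integral>x. x^4 \<partial>\<mu>) \<le> 256 * s^2"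
proof -
  interpret real_distribution \<mu> using sg by (simp add: sub_gaussian_def real_distr_iff)
  note bound = sub_gaussian_nn_fourth_moment[OF assms]
  show "integrable \<mu> (\<lambda>x. x^4)"
  proof (rule integrableI_bounded)
    show "(\<integral>\<^sup>+x. ennreal (norm (x^4)) \<partial>\<mu>) < \<infinity>"
      using bound by (simp add: le_less_trans)
  qed simp
  have "(\<integral>x. x^4 \<partial>\<mu>) = enn2real (\<integral>\<^sup>+x. ennreal (x^4) \<partial>\<mu>)"
    by (rule integral_eq_nn_integral) auto
  also have "\<dots> \<le> 256 * s^2"
    using bound by (intro enn2real_leI) auto
  finally show "(\<integral>x. x^4 \<partial>\<mu>) \<le> 256 * s^2" .
qed

lemma centred_in_S_parameter:
  assumes "centred_in_S \<kappa> \<mu> \<sigma>"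
  obtains s where "sub_gaussian \<mu> s" "\<sigma>\<^sup>2 \<le> s" "s < \<kappa> * \<sigma>\<^sup>2"
proof -
  from assms obtain s where sg: "sub_gaussian \<mu> s"
    and lo: "1 \<le> s / dvar \<mu>" and hi: "s / dvar \<mu> < \<kappa>" and \<sigma>: "0 < \<sigma>"
    and dv: "dvar \<mu> = \<sigma>\<^sup>2"
    unfolding centred_in_S_def Sclass_def by (auto simp: dvar_def)
  show ?thesis
    using that[OF sg] lo hi \<sigma> dv by (simp add: le_divide_eq divide_less_eq)
qed

lemma centred_in_S_moments:
  assumes "centred_in_S \<kappa> \<mu> \<sigma>"
  shows "real_distribution \<mu>" "integrable \<mu> (\<lambda>x. x\<^sup>2)" "integrable \<mu> (\<lambda>x. x)"
    "(\<integral>x. x \<partial>\<mu>) = 0" "(\<integral>x. x\<^sup>2 \<partial>\<mu>) = \<sigma>\<^sup>2" "0 < \<sigma>"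
proof -
  show rd: "real_distribution \<mu>" and i2: "integrable \<mu> (\<lambda>x. x\<^sup>2)"
    using assms by (auto simp: centred_in_S_def Sclass_def real_distr_iff)
  interpret real_distribution \<mu> by (rule rd)
  show "integrable \<mu> (\<lambda>x. x)"
    by (rule square_integrable_imp_integrable[OF _ i2]) simp
  show "(\<integral>x. x \<partial>\<mu>) = 0" "(\<integral>x. x\<^sup>2 \<partial>\<mu>) = \<sigma>\<^sup>2" "0 < \<sigma>"
    using assms by (auto simp: centred_in_S_def dmean_def)
qed

lemma centred_in_S_fourth_moment:
  assumes "centred_in_S \<kappa> \<mu> \<sigma>"
  shows "integrable \<mu> (\<lambda>x. x^4)" "(\<integral>x. x^4 \<partial>\<mu>) \<le> 256 * \<kappa>^2 * \<sigma>^4"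
proof -
  obtain s where sg: "sub_gaussian \<mu> s" and lo: "\<sigma>\<^sup>2 \<le> s" and hi: "s < \<kappa> * \<sigma>\<^sup>2"
    using centred_in_S_parameter[OF assms] .
  have m0: "dmean \<mu> = 0" and \<sigma>: "0 < \<sigma>"
    using assms by (auto simp: centred_in_S_def)
  have s: "0 < s" using lo \<sigma> by (meson less_le_trans zero_less_power)
  show "integrable \<mu> (\<lambda>x. x^4)"
    by (rule sub_gaussian_fourth_moment(1)[OF sg m0 s])
  have "s^2 \<le> (\<kappa> * \<sigma>\<^sup>2)^2"
    using hi s by (intro power_mono) auto
  then show "(\<integral>x. x^4 \<partial>\<mu>) \<le> 256 * \<kappa>^2 * \<sigma>^4"
    using sub_gaussian_fourth_moment(2)[OF sg m0 s]
    by (simp add: power_mult_distrib flip: power_mult)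
qed

text \<open>The truncated third moment \<open>E min(6 X^2, a |X|^3)\<close> appearing in the Taylor bound for
  characteristic functions is \<open>O(a \<sigma>^3)\<close>, via \<open>|x|^3 \<le> (x^4/\<sigma> + \<sigma> x^2)/2\<close>.\<close>
lemma centred_in_S_truncated_third_moment:
  assumes centred: "centred_in_S \<kappa> \<mu> \<sigma>" and a: "0 \<le> a"
  shows "(\<integral>x. min (6 * x\<^sup>2) (a * \<bar>x\<bar>^3) \<partial>\<mu>) \<le> a * ((256 * \<kappa>^2 + 1) / 2) * \<sigma>^3"
proof -
  note mom = centred_in_S_moments[OF centred] and mom4 = centred_in_S_fourth_moment[OF centred]
  interpret real_distribution \<mu> by (rule mom(1))
  have \<sigma>: "0 < \<sigma>" by (rule mom(6))
  have pointwise: "min (6 * x\<^sup>2) (a * \<bar>x\<bar>^3) \<le> a / 2 * (x^4 / \<sigma> + \<sigma> * x\<^sup>2)" for x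
  proof -
    have "0 \<le> x\<^sup>2 * (\<bar>x\<bar> - \<sigma>)\<^sup>2 / \<sigma>" using \<sigma> by simp
    also have "x\<^sup>2 * (\<bar>x\<bar> - \<sigma>)\<^sup>2 / \<sigma> = x^4 / \<sigma> + \<sigma> * x\<^sup>2 - 2 * \<bar>x\<bar>^3"
      using \<sigma> by (simp add: field_simps power2_eq_square power3_eq_cube power4_eq_xxxx)
    finally have "\<bar>x\<bar>^3 \<le> (x^4 / \<sigma> + \<sigma> * x\<^sup>2) / 2" by simp
    then have "a * \<bar>x\<bar>^3 \<le> a * ((x^4 / \<sigma> + \<sigma> * x\<^sup>2) / 2)" using a by (rule mult_left_mono)
    then show ?thesis by simp
  qed
  have "integrable \<mu> (\<lambda>x. min (6 * x\<^sup>2) (a * \<bar>x\<bar>^3))"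
    by (rule Bochner_Integration.integrable_bound[where f="\<lambda>x. 6 * x\<^sup>2"]) (auto simp: mom(2) a)
  then have "(\<integral>x. min (6 * x\<^sup>2) (a * \<bar>x\<bar>^3) \<partial>\<mu>) \<le> (\<integral>x. a / 2 * (x^4 / \<sigma> + \<sigma> * x\<^sup>2) \<partial>\<mu>)"
    by (intro integral_mono pointwise) (auto simp: mom(2) mom4(1))
  also have "\<dots> = a / 2 * ((\<integral>x. x^4 \<partial>\<mu>) / \<sigma> + \<sigma> * \<sigma>\<^sup>2)"
    using mom(2,5) mom4(1) by (simp add: Bochner_Integration.integral_add)
  also have "\<dots> \<le> a / 2 * (256 * \<kappa>^2 * \<sigma>^4 / \<sigma> + \<sigma> * \<sigma>\<^sup>2)"
    using mom4(2) \<sigma> a by (intro mult_left_mono add_mono divide_right_mono) auto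
  also have "\<dots> = a * ((256 * \<kappa>^2 + 1) / 2) * \<sigma>^3"
    using \<sigma> by (simp add: field_simps power2_eq_square power3_eq_cube power4_eq_xxxx)
  finally show ?thesis .
qed

lemma char_scaled_sum_law:
  assumes rd: "real_distribution \<mu>" and fin: "finite I"
  shows "char (scaled_sum_law \<mu> I c) t = (char \<mu> (t / c)) ^ card I"
proof -
  interpret real_distribution \<mu> by fact
  interpret product_sigma_finite "\<lambda>_. \<mu>"
    by (simp add: product_sigma_finite_def sigma_finite_measure_axioms)
  have [measurable]: "(\<lambda>\<omega>. (\<Sum>i\<in>I. \<omega> i) / c) \<in> borel_measurable (PiM I (\<lambda>_. \<mu>))"
    by measurable
  have iexp_sum: "iexp (t * ((\<Sum>i\<in>I. \<omega> i) / c)) = (\<Prod>i\<in>I. iexp ((t / c) * \<omega> i))" for \<omega>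
  proof -
    have "\<i> * complex_of_real (t * ((\<Sum>i\<in>I. \<omega> i) / c)) = (\<Sum>i\<in>I. \<i> * complex_of_real ((t / c) * \<omega> i))"
      by (simp add: sum_distrib_left sum_divide_distrib)
    then show ?thesis
      by (simp add: exp_sum[OF fin, symmetric])
  qed
  have "char (scaled_sum_law \<mu> I c) t = (CLINT \<omega>|PiM I (\<lambda>_. \<mu>). iexp (t * ((\<Sum>i\<in>I. \<omega> i) / c)))"
    by (simp add: char_def scaled_sum_law_def integral_distr)
  also have "\<dots> = (CLINT \<omega>|PiM I (\<lambda>_. \<mu>). (\<Prod>i\<in>I. iexp ((t / c) * \<omega> i)))"
    by (rule Bochner_Integration.integral_cong[OF refl iexp_sum])
  also have "\<dots> = (\<Prod>i\<in>I. CLINT x|\<mu>. iexp ((t / c) * x))"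
    by (rule product_integral_prod[OF fin]) (rule integrable_iexp, auto)
  finally show ?thesis
    by (simp add: char_def)
qed

lemma char_scaled_sum_law_approx:
  fixes n :: nat
  assumes centred: "centred_in_S \<kappa> \<mu> \<sigma>" and n: "0 < n" and tn: "t^2 / 4 \<le> n"
  shows "cmod (char (scaled_sum_law \<mu> {1..n} (\<sigma> * sqrt n)) t - complex_of_real ((1 + (-(t^2)/2) / n)^n))
         \<le> \<bar>t\<bar>^3 * ((256 * \<kappa>^2 + 1) / 2) / (6 * sqrt n)"
proof -
  note mom = centred_in_S_moments[OF centred]
  interpret real_distribution \<mu> by (rule mom(1))
  define C where "C = (256 * \<kappa>^2 + 1) / 2"
  define u where "u = t / (\<sigma> * sqrt n)"
  define b where "b = 1 + (-(t^2)/2) / n"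
  have \<sigma>: "0 < \<sigma>" and sn: "0 < sqrt (real n)" using mom(6) n by auto
  have "cmod (char \<mu> u - (1 - u^2 * \<sigma>\<^sup>2 / 2)) \<le> (u^2 / 6) * expectation (\<lambda>x. min (6 * x^2) (\<bar>u\<bar> * \<bar>x\<bar>^3))"
    by (rule char_approx3[OF mom(3,4,2)]) (simp add: mom(4,5))
  also have "\<dots> \<le> (u^2 / 6) * (\<bar>u\<bar> * C * \<sigma>^3)"
    unfolding C_def by (intro mult_left_mono centred_in_S_truncated_third_moment[OF centred]) auto
  also have "\<dots> = \<bar>t\<bar>^3 * C / (6 * n * sqrt n)"
    using \<sigma> sn by (simp add: u_def field_simps power2_eq_square power3_eq_cube abs_mult abs_divide)
  finally have one_step: "cmod (char \<mu> u - (1 - u^2 * \<sigma>\<^sup>2 / 2)) \<le> \<bar>t\<bar>^3 * C / (6 * n * sqrt n)" .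
  have b: "1 - u^2 * \<sigma>\<^sup>2 / 2 = b"
    using \<sigma> sn by (simp add: u_def b_def power_divide power_mult_distrib)
  have b1: "\<bar>b\<bar> \<le> 1"
    using tn n by (simp add: b_def abs_le_iff divide_le_eq field_simps)
  have "cmod ((char \<mu> u)^n - (complex_of_real b)^n) \<le> n * cmod (char \<mu> u - complex_of_real b)"
    by (rule norm_power_diff) (use b1 cmod_char_le_1 in auto)
  also have "\<dots> \<le> n * (\<bar>t\<bar>^3 * C / (6 * n * sqrt n))"
    using one_step b by (intro mult_left_mono) auto
  also have "\<dots> = \<bar>t\<bar>^3 * C / (6 * sqrt n)"
    using n by (simp add: field_simps)
  finally show ?thesis
    using char_scaled_sum_law[OF mom(1), of "{1..n}" "\<sigma> * sqrt n" t]
    by (simp add: u_def b_def C_def)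
qed

lemma scaled_sum_law_weak_conv:
  assumes centred: "\<And>k. centred_in_S \<kappa> (\<mu> k) (\<sigma> k)"
    and n_top: "filterlim n at_top sequentially"
  shows "weak_conv_m (\<lambda>k. scaled_sum_law (\<mu> k) {1..n k} (\<sigma> k * sqrt (n k))) std_normal_distribution"
proof (rule levy_continuity[OF real_distribution_scaled_sum_law real_dist_normal_dist])
  show "real_distribution (\<mu> k)" for k
    by (rule centred_in_S_moments(1)[OF centred])
  fix t :: real
  let ?C = "(256 * \<kappa>^2 + 1) / 2"
  let ?M = "\<lambda>k. scaled_sum_law (\<mu> k) {1..n k} (\<sigma> k * sqrt (n k))"
  have real_n_top: "filterlim (\<lambda>k. real (n k)) at_top sequentially"
    by (rule filterlim_compose[OF filterlim_real_sequentially n_top])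
  have "\<forall>\<^sub>F k in sequentially. t^2/4 + 1 \<le> real (n k)"
    using real_n_top unfolding filterlim_at_top by blast
  then have "\<forall>\<^sub>F k in sequentially. 0 < n k \<and> t^2/4 \<le> real (n k)"
  proof eventually_elim
    case (elim k)
    then have "1 \<le> real (n k)" using zero_le_power2[of t] by linarith
    then show ?case using elim by simp
  qed
  then have close: "\<forall>\<^sub>F k in sequentially.
      cmod (char (?M k) t - complex_of_real ((1 + (-(t^2)/2) / n k)^n k)) \<le> \<bar>t\<bar>^3 * ?C / (6 * sqrt (n k))"
    by eventually_elim (intro char_scaled_sum_law_approx[OF centred], auto)
  have "filterlim (\<lambda>k. 6 * sqrt (real (n k))) at_top sequentially"
    by (intro filterlim_tendsto_pos_mult_at_top[OF tendsto_const] sqrt_at_top[THEN filterlim_compose]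
        real_n_top) simp
  then have error_to_0: "(\<lambda>k. \<bar>t\<bar>^3 * ?C / (6 * sqrt (n k))) \<longlonglongrightarrow> 0"
    by (intro tendsto_divide_0[OF tendsto_const] filterlim_at_top_imp_at_infinity)
  have "(\<lambda>k. complex_of_real ((1 + (-(t^2)/2) / n k)^n k)) \<longlonglongrightarrow> complex_of_real (exp (-(t^2)/2))"
    by (rule isCont_tendsto_compose[OF _ filterlim_compose[OF tendsto_exp_limit_sequentially n_top]]) auto
  then have "(\<lambda>k. char (?M k) t) \<longlonglongrightarrow> complex_of_real (exp (-(t^2)/2))"
    by (rule Lim_transform) (rule Lim_null_comparison[OF close error_to_0])
  then show "(\<lambda>k. char (?M k) t) \<longlonglongrightarrow> char std_normal_distribution t"
    by (simp add: char_std_normal_distribution)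
qed

text \<open>Otherwise there is a sequence of counterexamples
  with \<open>n\<^sub>k \<rightarrow> \<infinity>\<close>; along it the cdf of \<open>S\<^sub>n/(\<sigma> sqrt n)\<close> at \<open>1/2\<close> stays above \<open>3/4\<close>, yet by
  weak convergence it tends to \<open>\<Phi>(1/2) < 3/4\<close>.\<close>
lemma uniform_clt_lower_bound:
  "\<exists>N::nat. \<forall>n\<ge>N. \<forall>\<mu> \<sigma>. centred_in_S \<kappa> \<mu> \<sigma> \<longrightarrow> 1/4 \<le> tail_prob \<mu> {1..n} (\<sigma> * sqrt n / 2)"
proof (rule ccontr)
  assume "\<not> ?thesis"
  then have "\<forall>k. \<exists>n \<mu> \<sigma>. Suc k \<le> n \<and> centred_in_S \<kappa> \<mu> \<sigma> \<and> tail_prob \<mu> {1..n} (\<sigma> * sqrt n / 2) < 1/4"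
    by (force simp: not_le)
  then have "\<exists>n \<mu> \<sigma>. \<forall>k. Suc k \<le> n k \<and> centred_in_S \<kappa> (\<mu> k) (\<sigma> k)
      \<and> tail_prob (\<mu> k) {1..n k} (\<sigma> k * sqrt (n k) / 2) < 1/4"
    unfolding choice_iff .
  then obtain n \<mu> \<sigma> where n: "\<And>k. Suc k \<le> n k" and centred: "\<And>k. centred_in_S \<kappa> (\<mu> k) (\<sigma> k)"
    and small: "\<And>k. tail_prob (\<mu> k) {1..n k} (\<sigma> k * sqrt (n k) / 2) < 1/4"
    by blast
  let ?M = "\<lambda>k. scaled_sum_law (\<mu> k) {1..n k} (\<sigma> k * sqrt (n k))"
  have "filterlim n at_top sequentially"
    by (intro filterlim_at_top_mono[OF filterlim_ident] always_eventually allI)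
      (use n Suc_leD in blast)
  then have "(\<lambda>k. cdf (?M k) (1/2)) \<longlonglongrightarrow> cdf std_normal_distribution (1/2)"
    using scaled_sum_law_weak_conv[of \<kappa> \<mu> \<sigma> n] centred isCont_std_normal_cdf
    unfolding weak_conv_m_def weak_conv_def by blast
  moreover have "3/4 \<le> cdf (?M k) (1/2)" for k
  proof -
    have "0 < \<sigma> k * sqrt (n k)"
      using centred_in_S_moments(6)[OF centred[of k]] n[of k] by simp
    then have "1 \<le> cdf (?M k) (1/2) + tail_prob (\<mu> k) {1..n k} (\<sigma> k * sqrt (n k) / 2)"
      by (rule cdf_scaled_sum_law_plus_tail[OF centred_in_S_moments(1)[OF centred[of k]]])
    then show ?thesis using small[of k] by linarith
  qed
  ultimately have "3/4 \<le> cdf std_normal_distribution (1/2)"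
    by (intro LIMSEQ_le_const) auto
  then show False using std_normal_cdf_half by linarith
qed

text \<open>Tail probabilities of sums over disjoint index sets are supermultiplicative: the two
  partial sums are independent, and both exceeding their thresholds forces the total to exceed
  the sum of the thresholds.\<close>
lemma tail_prob_union:
  assumes rd: "real_distribution \<mu>" and IJ: "I \<inter> J = {}" and fin: "finite I" "finite J"
  shows "tail_prob \<mu> I c1 * tail_prob \<mu> J c2 \<le> tail_prob \<mu> (I \<union> J) (c1 + c2)"
proof -
  interpret real_distribution \<mu> by fact
  interpret PS: product_sigma_finite "\<lambda>_. \<mu>"
    by (simp add: product_sigma_finite_def sigma_finite_measure_axioms)
  interpret PJ: finite_product_sigma_finite "\<lambda>_. \<mu>" J
    by standard (rule fin)
  let ?P = "PiM I (\<lambda>_. \<mu>) \<Otimes>\<^sub>M PiM J (\<lambda>_. \<mu>)"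
  let ?A = "{\<omega> \<in> space (PiM I (\<lambda>_. \<mu>)). c1 \<le> (\<Sum>i\<in>I. \<omega> i)}"
  let ?B = "{\<omega> \<in> space (PiM J (\<lambda>_. \<mu>)). c2 \<le> (\<Sum>i\<in>J. \<omega> i)}"
  let ?E = "{\<omega> \<in> space (PiM (I \<union> J) (\<lambda>_. \<mu>)). c1 + c2 \<le> (\<Sum>i\<in>I \<union> J. \<omega> i)}"
  interpret P: prob_space ?P
    by (intro prob_space_pair prob_space_PiM) (auto simp: prob_space_axioms)
  have merge: "merge I J \<in> measurable ?P (PiM (I \<union> J) (\<lambda>_. \<mu>))"
    by (rule measurable_merge)
  have sE: "?E \<in> sets (PiM (I \<union> J) (\<lambda>_. \<mu>))" by (rule tail_event_sets[OF rd])
  have "?A \<times> ?B \<subseteq> merge I J -` ?E \<inter> space ?P"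
  proof safe
    fix x y assume x: "x \<in> space (PiM I (\<lambda>_. \<mu>))" "c1 \<le> (\<Sum>i\<in>I. x i)"
      and y: "y \<in> space (PiM J (\<lambda>_. \<mu>))" "c2 \<le> (\<Sum>i\<in>J. y i)"
    show xy: "(x, y) \<in> space ?P" using x y by (simp add: space_pair_measure)
    have "(\<Sum>i\<in>I \<union> J. merge I J (x, y) i) = (\<Sum>i\<in>I. x i) + (\<Sum>i\<in>J. y i)"
      using IJ fin by (simp add: sum.union_disjoint)
    then show "(x, y) \<in> merge I J -` ?E"
      using measurable_space[OF merge xy] x y by simp
  qed
  then have "measure ?P (?A \<times> ?B) \<le> measure ?P (merge I J -` ?E \<inter> space ?P)"
    by (intro P.finite_measure_mono measurable_sets[OF merge sE])
  also have "\<dots> = measure (distr ?P (PiM (I \<union> J) (\<lambda>_. \<mu>)) (merge I J)) ?E"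
    by (rule measure_distr[OF merge sE, symmetric])
  also have "\<dots> = tail_prob \<mu> (I \<union> J) (c1 + c2)"
    unfolding tail_prob_def using PS.distr_merge[OF IJ fin] by simp
  finally show ?thesis
    unfolding tail_prob_def measure_def
    by (simp add: PJ.emeasure_pair_measure_Times tail_event_sets[OF rd] enn2real_mult)
qed

text \<open>Tail probabilities only depend on the number of summands: shifting the index block
  \<open>{a+1..a+b}\<close> to \<open>{1..b}\<close> preserves the product measure.\<close>
lemma tail_prob_shift:
  assumes rd: "real_distribution \<mu>"
  shows "tail_prob \<mu> {a+1..a+b} c = tail_prob \<mu> {1..b} c"
proof -
  interpret real_distribution \<mu> by fact
  let ?K = "{a+1..a+b}"
  let ?t = "\<lambda>\<omega>. \<lambda>n\<in>{1..b}. \<omega> (n + a)"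
  let ?T = "{\<omega> \<in> space (PiM {1..b} (\<lambda>_. \<mu>)). c \<le> (\<Sum>i\<in>{1..b}. \<omega> i)}"
  have D: "distr (PiM ?K (\<lambda>_. \<mu>)) (PiM {1..b} (\<lambda>_. \<mu>)) ?t = PiM {1..b} (\<lambda>_. \<mu>)"
    using distr_PiM_reindex[of ?K "\<lambda>_. \<mu>" "\<lambda>n. n + a" "{1..b}"]
    by (auto simp: prob_space_axioms inj_on_def)
  have t: "?t \<in> measurable (PiM ?K (\<lambda>_. \<mu>)) (PiM {1..b} (\<lambda>_. \<mu>))"
    by (rule measurable_restrict) auto
  have "(\<Sum>i\<in>{1..b}. \<omega> (i + a)) = (\<Sum>i\<in>?K. \<omega> i)" for \<omega> :: "nat \<Rightarrow> real"
    using sum.shift_bounds_cl_nat_ivl[of \<omega> 1 a b] by (simp add: add.commute)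
  then have "?t -` ?T \<inter> space (PiM ?K (\<lambda>_. \<mu>)) = {\<omega> \<in> space (PiM ?K (\<lambda>_. \<mu>)). c \<le> (\<Sum>i\<in>?K. \<omega> i)}"
    using measurable_space[OF t] by auto
  then show ?thesis
    unfolding tail_prob_def using measure_distr[OF t tail_event_sets[OF rd]] D by simp
qed

lemma tail_prob_supermult:
  assumes rd: "real_distribution \<mu>"
  shows "tail_prob \<mu> {1..a} c1 * tail_prob \<mu> {1..b} c2 \<le> tail_prob \<mu> {1..a+b} (c1 + c2)"
proof -
  have "{1..a+b} = {1..a} \<union> {a+1..a+b}" and "{1..a} \<inter> {a+1..a+b} = {}" by auto
  then show ?thesis
    using tail_prob_union[OF rd, of "{1..a}" "{a+1..a+b}" c1 c2] tail_prob_shift[OF rd, of a b c2]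
    by simp
qed

lemma supermult_block_bound:
  fixes g :: "nat \<Rightarrow> real" and L :: nat
  assumes L: "1 \<le> L" and supermult: "\<And>a b. g a * g b \<le> g (a + b)"
    and base: "\<And>k. L \<le> k \<Longrightarrow> k < 2 * L \<Longrightarrow> 1/4 \<le> g k"
  shows "L \<le> n \<Longrightarrow> (1/4)^(n div L) \<le> g n"
proof (induction n rule: less_induct)
  case (less n)
  have div: "n div L = Suc ((n - L) div L)" using less.prems L by (simp add: le_div_geq)
  show ?case
  proof (cases "n < 2 * L")
    case True
    then have "n div L = 1" using div L by simp
    then show ?thesis using base[OF less.prems True] by simp
  next
    case False
    then have nL: "L \<le> n - L" and lt: "n - L < n" using L by auto
    have IH: "(1/4)^((n - L) div L) \<le> g (n - L)" by (rule less.IH[OF lt nL])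
    have gL: "1/4 \<le> g L" using base[of L] L by simp
    have "(1/4::real)^(n div L) = (1/4)^((n - L) div L) * (1/4)"
      using div by simp
    also have "\<dots> \<le> g (n - L) * g L"
      by (rule mult_mono[OF IH gL]) (auto intro: order_trans[OF _ IH])
    also have "\<dots> \<le> g n" using supermult[of "n - L" L] nL by simp
    finally show ?thesis .
  qed
qed

text \<open>Blocks of
  length \<open>L = floor r \<ge> r/2\<close> give \<open>g(n) \<ge> (1/4)^(n div L)\<close> and \<open>n div L \<le> 2n/r\<close>.\<close>
lemma supermult_exp_lower_bound:
  fixes g :: "nat \<Rightarrow> real" and r :: real
  assumes supermult: "\<And>a b. g a * g b \<le> g (a + b)"
    and base: "\<And>k. N \<le> k \<Longrightarrow> real k \<le> 2 * r \<Longrightarrow> 1/4 \<le> g k"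
    and r: "real N + 1 \<le> r" and n: "N \<le> n"
  shows "1/4 * exp (- 4 * real n / r) \<le> g n"
proof (cases "real n \<le> 2 * r")
  case True
  have "1/4 * exp (- 4 * real n / r) \<le> 1/4"
    using r by (simp add: divide_nonneg_pos)
  then show ?thesis using base[OF n True] by linarith
next
  case False
  define L where "L = nat \<lfloor>r\<rfloor>"
  have L: "real L \<le> r" "r < real L + 1" "1 \<le> L" "N < L"
    unfolding L_def using r by linarith+
  have blocks: "(1/4)^(n div L) \<le> g n"
  proof (rule supermult_block_bound[OF L(3) supermult])
    show "1/4 \<le> g k" if "L \<le> k" "k < 2 * L" for k
      using base[of k] that L by linarith
    show "L \<le> n" using False L by linarith
  qed
  have "1 \<le> real L" using L(3) by simp
  then have half: "r / 2 \<le> real L" using L(2) by linarith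
  have "real (n div L) \<le> real n / real L" by (rule of_nat_div_le_of_nat)
  also have "\<dots> \<le> real n / (r / 2)"
    using half r by (intro divide_left_mono) auto
  finally have "- 4 * real n / r \<le> - 2 * real (n div L)"
    using r by (simp add: field_simps)
  then have "exp (- 4 * real n / r) \<le> exp (- 2 * real (n div L))" by simp
  then have "1/4 * exp (- 4 * real n / r) \<le> exp (- 2 * real (n div L))"
    using exp_gt_zero[of "- 4 * real n / r"] by linarith
  also have "\<dots> = (exp (-2))^(n div L)" by (simp add: exp_of_nat_mult[symmetric])
  also have "\<dots> \<le> (1/4)^(n div L)"
  proof (rule power_mono)
    have "1 + 2 + 2^2/2 \<le> exp (2::real)" using exp_lower_Taylor_quadratic[of 2] by simp
    then show "exp (-2) \<le> (1/4::real)" by (simp add: exp_minus field_simps)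
  qed simp
  finally show ?thesis using blocks by linarith
qed

text \<open>The tail bound for a single distribution, given the CLT lower bound from index \<open>N\<close> on:
  apply the previous lemma to \<open>g(k) = P{S\<^sub>k \<ge> \<gamma> k}\<close> with \<open>r = \<sigma>^2/(8 \<gamma>^2)\<close>; for \<open>k \<le> 2r\<close>
  the threshold \<open>\<gamma> k\<close> is at most \<open>\<sigma> sqrt k / 2\<close>.\<close>
lemma tail_prob_exp_lower_bound:
  assumes rd: "real_distribution \<mu>" and \<sigma>: "0 < \<sigma>"
    and clt: "\<And>k. N \<le> k \<Longrightarrow> 1/4 \<le> tail_prob \<mu> {1..k} (\<sigma> * sqrt k / 2)"
    and \<gamma>: "0 \<le> \<gamma>" "8 * (real N + 1) * \<gamma>\<^sup>2 \<le> \<sigma>\<^sup>2" and n: "N \<le> n"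
  shows "1/4 * exp (- 32 * real n * \<gamma>\<^sup>2 / \<sigma>\<^sup>2) \<le> tail_prob \<mu> {1..n} (\<gamma> * real n)"
proof -
  have base: "1/4 \<le> tail_prob \<mu> {1..k} (\<gamma> * real k)" if k: "N \<le> k" "4 * \<gamma>\<^sup>2 * real k \<le> \<sigma>\<^sup>2" for k
  proof -
    have "(\<gamma> * sqrt k)\<^sup>2 \<le> (\<sigma> / 2)\<^sup>2"
      using k(2) by (simp add: power_mult_distrib power_divide)
    then have "\<gamma> * sqrt k \<le> \<sigma> / 2"
      by (rule power2_le_imp_le) (use \<sigma> in simp)
    then have "\<gamma> * sqrt k * sqrt k \<le> \<sigma> / 2 * sqrt k"
      by (rule mult_right_mono) simp
    then have "\<gamma> * real k \<le> \<sigma> * sqrt k / 2"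
      by (simp add: mult.assoc)
    then show ?thesis
      using clt[OF k(1)] tail_prob_antimono[OF rd] by (meson order_trans)
  qed
  show ?thesis
  proof (cases "\<gamma> = 0")
    case True
    then show ?thesis using base[OF n] \<sigma> by simp
  next
    case False
    define r where "r = \<sigma>\<^sup>2 / (8 * \<gamma>\<^sup>2)"
    have \<gamma>2: "0 < \<gamma>\<^sup>2" using False by simp
    have "1/4 * exp (- 4 * real n / r) \<le> tail_prob \<mu> {1..n} (\<gamma> * real n)"
    proof (rule supermult_exp_lower_bound[OF _ _ _ n])
      show "tail_prob \<mu> {1..a} (\<gamma> * real a) * tail_prob \<mu> {1..b} (\<gamma> * real b)
          \<le> tail_prob \<mu> {1..a + b} (\<gamma> * real (a + b))" for a b
        using tail_prob_supermult[OF rd, of a "\<gamma> * real a" b "\<gamma> * real b"] by (simp add: distrib_left)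
      show "1/4 \<le> tail_prob \<mu> {1..k} (\<gamma> * real k)" if "N \<le> k" "real k \<le> 2 * r" for k
        using base[OF that(1)] that(2) \<gamma>2 by (simp add: r_def field_simps)
      show "real N + 1 \<le> r"
        using \<gamma>(2) \<gamma>2 by (simp add: r_def field_simps)
    qed
    moreover have "- 4 * real n / r = - 32 * real n * \<gamma>\<^sup>2 / \<sigma>\<^sup>2"
      using \<gamma>2 \<sigma> by (simp add: r_def field_simps)
    ultimately show ?thesis by simp
  qed
qed

theorem lemmaA:
  fixes \<kappa> :: real
  assumes "\<kappa> \<ge> 1"
  shows "\<exists>\<kappa>1>0. \<exists>\<kappa>2>0. \<exists>n0::nat.
    \<forall>\<mu> \<in> Sclass \<kappa>. \<forall>\<sigma>::real.
      dmean \<mu> = 0 \<longrightarrow> \<sigma> > 0 \<longrightarrow> (\<integral>x. x\<^sup>2 \<partial>\<mu>) = \<sigma>\<^sup>2 \<longrightarrow>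
      (\<forall>n\<ge>n0. \<forall>\<gamma>::real. 0 \<le> \<gamma> \<longrightarrow> \<gamma> \<le> \<kappa>1 * \<sigma> \<longrightarrow>
        measure (PiM {1..n} (\<lambda>_. \<mu>))
          {\<omega> \<in> space (PiM {1..n} (\<lambda>_. \<mu>)). (\<Sum>i=1..n. \<omega> i) \<ge> \<gamma> * real n}
        \<ge> 1/4 * exp (- (real n * \<gamma>\<^sup>2) / (\<kappa>2 * \<sigma>\<^sup>2)))"
proof -
  obtain N :: nat where clt: "\<And>n \<mu> \<sigma>. N \<le> n \<Longrightarrow> centred_in_S \<kappa> \<mu> \<sigma>
      \<Longrightarrow> 1/4 \<le> tail_prob \<mu> {1..n} (\<sigma> * sqrt n / 2)"
    using uniform_clt_lower_bound[of \<kappa>] by blast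
  define \<kappa>1 where "\<kappa>1 = 1 / sqrt (8 * (real N + 1))"
  have bound: "1/4 * exp (- (real n * \<gamma>\<^sup>2) / (1/32 * \<sigma>\<^sup>2)) \<le> tail_prob \<mu> {1..n} (\<gamma> * real n)"
    if centred: "centred_in_S \<kappa> \<mu> \<sigma>" and n: "N \<le> n" and \<gamma>: "0 \<le> \<gamma>" "\<gamma> \<le> \<kappa>1 * \<sigma>"
    for \<mu> \<sigma> n \<gamma>
  proof -
    have \<sigma>: "0 < \<sigma>" by (rule centred_in_S_moments(6)[OF centred])
    have "\<gamma>\<^sup>2 \<le> (\<kappa>1 * \<sigma>)\<^sup>2" using \<gamma> by (intro power_mono) auto
    then have small: "8 * (real N + 1) * \<gamma>\<^sup>2 \<le> \<sigma>\<^sup>2"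
      by (simp add: \<kappa>1_def power_mult_distrib power_divide field_simps)
    have exponent: "- (real n * \<gamma>\<^sup>2) / (1/32 * \<sigma>\<^sup>2) = - 32 * real n * \<gamma>\<^sup>2 / \<sigma>\<^sup>2" by simp
    show ?thesis
      unfolding exponent
      by (rule tail_prob_exp_lower_bound[OF centred_in_S_moments(1)[OF centred] \<sigma> clt[OF _ centred] \<gamma>(1) small n])
  qed
  show ?thesis
  proof (rule exI[of _ \<kappa>1], intro conjI exI[of _ "1/32::real"] exI[of _ N] ballI allI impI)
    fix \<mu> \<sigma> n \<gamma>
    assume "\<mu> \<in> Sclass \<kappa>" "dmean \<mu> = 0" "0 < \<sigma>" "(\<integral>x. x\<^sup>2 \<partial>\<mu>) = \<sigma>\<^sup>2"
      and "N \<le> n" "0 \<le> \<gamma>" "\<gamma> \<le> \<kappa>1 * \<sigma>"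
    then show "1/4 * exp (- (real n * \<gamma>\<^sup>2) / (1/32 * \<sigma>\<^sup>2)) \<le> measure (PiM {1..n} (\<lambda>_. \<mu>))
        {\<omega> \<in> space (PiM {1..n} (\<lambda>_. \<mu>)). \<gamma> * real n \<le> (\<Sum>i=1..n. \<omega> i)}"
      unfolding tail_prob_def[symmetric] by (intro bound) (simp_all add: centred_in_S_def)
  qed (simp_all add: \<kappa>1_def)
qed

end
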